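(* Let $\phi$ be the real root of $x^3=x^2+x+1$. For $n\ge 3$, if $\langle a_i\rangle_{i=1}^n$ is a sequence of integers, not identically zero, with $a_i=a_{i-1}+a_{i-2}+a_{i-3}$ for $4\le i\le n$ and $a_n=0$, then either $|a_1|>0.01\phi^{n/2}$ or $|a_2|>0.01\phi^{(n-1)/2}$ (or both). *)

theory Defs
  imports Complex_Main
begin

definition trib_phi :: real where
  "trib_phi = (THE x::real. x ^ 3 = x ^ 2 + x + 1)"

end

theory Submission
  imports Defs
begin

text \<open>
  Write x^3 - x^2 - x - 1 = (x - \<phi>) (x^2 + (\<phi> - 1) x + (\<phi>^2 - \<phi> - 1)); the quadratic factor
  has complex roots \<alpha>, \<alpha>' with |\<alpha>|^2 = \<phi>^2 - \<phi> - 1 = 1/\<phi>. Along a tribonacci sequence x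
  the linear functional S i = x (i+2) + (\<phi> - 1) x (i+1) + (\<phi>^2 - \<phi> - 1) x i grows by the
  factor \<phi>, while the positive definite quadratic form Q i = |d (i+1) - \<alpha> d i|^2 in the
  differences d i = x (i+1) - \<phi> x i shrinks by the factor 1/\<phi>. If x (N+2) = 0 and
  (x N, x (N+1)) is a nonzero integer vector, then Q N \<ge> 1 and Q N \<ge> 2 (S N)^2. Transported
  back to the start, Q 0 \<ge> \<phi>^N while (S 0)^2 \<le> Q 0 / 2; but then Q 0 is bounded by a
  multiple of (x 0)^2 + (x 1)^2 alone.
\<close>

lemma trib_phi_cubic_and_bounds:
  "trib_phi ^ 3 = trib_phi ^ 2 + trib_phi + 1 \<and> 1.839 < trib_phi \<and> trib_phi < 1.8394"
proof -
  have "\<exists>x::real. 1.839 \<le> x \<and> x \<le> 1.8394 \<and> x ^ 3 - x ^ 2 - x = 1"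
  proof (rule IVT)
    show "(1.839::real) ^ 3 - 1.839 ^ 2 - 1.839 \<le> 1" by (simp add: power_numeral_reduce)
    show "1 \<le> (1.8394::real) ^ 3 - 1.8394 ^ 2 - 1.8394" by (simp add: power_numeral_reduce)
  qed (auto intro!: continuous_intros)
  then obtain x :: real where x: "1.839 \<le> x" "x \<le> 1.8394" "x ^ 3 - x ^ 2 - x = 1"
    by blast
  have root: "x ^ 3 = x ^ 2 + x + 1"
    using x(3) by simp
  have unique: "y = x" if y: "y ^ 3 = y ^ 2 + y + 1" for y :: real
  proof -
    have factored: "(y - x) * (y ^ 2 + (x - 1) * y + (x ^ 2 - x - 1)) = 0"
      using root y by algebra
    \<comment> \<open>the quadratic cofactor has negative discriminant because \<open>x > 5/3\<close>\<close>
    have "4 * (y ^ 2 + (x - 1) * y + (x ^ 2 - x - 1))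
        = (2 * y + (x - 1)) ^ 2 + (3 * x - 5) * (x + 1)"
      by (simp add: algebra_simps power2_eq_square)
    moreover have "(3 * x - 5) * (x + 1) > 0"
      using x(1) by (intro mult_pos_pos) auto
    ultimately have "y ^ 2 + (x - 1) * y + (x ^ 2 - x - 1) > 0"
      by (smt (verit) zero_le_power2)
    with factored show ?thesis by simp
  qed
  have "trib_phi = x"
    unfolding trib_phi_def by (rule the_equality, rule root, erule unique)
  moreover have "x \<noteq> 1.839" "x \<noteq> 1.8394"
    using x(3) by (auto simp: power_numeral_reduce simp del: eq_divide_eq_numeral1)
  ultimately show ?thesis
    using x(1,2) root by auto
qed

lemma trib_phi_cubic: "trib_phi ^ 3 = trib_phi ^ 2 + trib_phi + 1"
  using trib_phi_cubic_and_bounds by simp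

lemma trib_phi_bounds: "1.839 < trib_phi" "trib_phi < 1.8394"
  using trib_phi_cubic_and_bounds by simp_all

lemma trib_phi_square_bounds: "3.3819 < trib_phi ^ 2" "trib_phi ^ 2 < 3.3834"
proof -
  have "(1.839::real) ^ 2 < trib_phi ^ 2" "trib_phi ^ 2 < (1.8394::real) ^ 2"
    using trib_phi_bounds by (intro power_strict_mono; simp)+
  then show "3.3819 < trib_phi ^ 2" "trib_phi ^ 2 < 3.3834"
    by (simp_all add: power2_eq_square)
qed

lemma binary_quadratic_form_nonneg:
  fixes a b c a_lo b_hi c_lo p q :: real
  assumes "0 < a_lo" "b_hi\<^sup>2 \<le> 4 * a_lo * c_lo" "a_lo \<le> a" "\<bar>b\<bar> \<le> b_hi" "c_lo \<le> c"
  shows "0 \<le> a * p\<^sup>2 + b * p * q + c * q\<^sup>2"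
proof -
  have "4 * a_lo * (a_lo * \<bar>p\<bar>\<^sup>2 - b_hi * \<bar>p\<bar> * \<bar>q\<bar> + c_lo * \<bar>q\<bar>\<^sup>2)
      = (2 * a_lo * \<bar>p\<bar> - b_hi * \<bar>q\<bar>)\<^sup>2 + (4 * a_lo * c_lo - b_hi\<^sup>2) * \<bar>q\<bar>\<^sup>2"
    by (simp add: algebra_simps power2_eq_square)
  also have "\<dots> \<ge> 0"
    using assms by (intro add_nonneg_nonneg mult_nonneg_nonneg) auto
  finally have "0 \<le> a_lo * \<bar>p\<bar>\<^sup>2 - b_hi * \<bar>p\<bar> * \<bar>q\<bar> + c_lo * \<bar>q\<bar>\<^sup>2"
    using assms(1) by (simp add: zero_le_mult_iff)
  moreover have "a_lo * \<bar>p\<bar>\<^sup>2 \<le> a * p\<^sup>2" "c_lo * \<bar>q\<bar>\<^sup>2 \<le> c * q\<^sup>2"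
    using assms(3,5) by (simp_all add: mult_right_mono)
  moreover have "\<bar>b * p * q\<bar> \<le> b_hi * \<bar>p\<bar> * \<bar>q\<bar>"
    using assms(4) by (simp add: abs_mult mult_right_mono)
  ultimately show ?thesis
    by (smt (verit))
qed

text \<open>
  For a root \<open>f\<close> of the cubic, \<open>trib_form f u v = |v - \<alpha> u|\<^sup>2\<close> with \<open>\<alpha>\<close> a root of
  \<open>X\<^sup>2 + (f - 1) X + (f\<^sup>2 - f - 1)\<close>.
\<close>
definition trib_form :: "'a::idom \<Rightarrow> 'a \<Rightarrow> 'a \<Rightarrow> 'a" where
  "trib_form f u v = v\<^sup>2 + (f - 1) * u * v + (f\<^sup>2 - f - 1) * u\<^sup>2"

definition trib_quad :: "'a::idom \<Rightarrow> (nat \<Rightarrow> 'a) \<Rightarrow> nat \<Rightarrow> 'a" where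
  "trib_quad f x i = trib_form f (x (i + 1) - f * x i) (x (i + 2) - f * x (i + 1))"

definition trib_lin :: "'a::idom \<Rightarrow> (nat \<Rightarrow> 'a) \<Rightarrow> nat \<Rightarrow> 'a" where
  "trib_lin f x i = x (i + 2) + (f - 1) * x (i + 1) + (f\<^sup>2 - f - 1) * x i"

lemma trib_quad_step:
  fixes f :: "'a::idom"
  assumes "f ^ 3 = f\<^sup>2 + f + 1" "x (i + 3) = x (i + 2) + x (i + 1) + x i"
  shows "trib_quad f x i = f * trib_quad f x (i + 1)"
proof -
  have index_shift: "i + 1 + 1 = i + 2" "i + 1 + 2 = i + 3"
    by simp_all
  show ?thesis
    unfolding trib_quad_def trib_form_def index_shift using assms by algebra
qed

lemma trib_lin_step:
  fixes f :: "'a::idom"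
  assumes "f ^ 3 = f\<^sup>2 + f + 1" "x (i + 3) = x (i + 2) + x (i + 1) + x i"
  shows "trib_lin f x (i + 1) = f * trib_lin f x i"
proof -
  have index_shift: "i + 1 + 1 = i + 2" "i + 1 + 2 = i + 3"
    by simp_all
  show ?thesis
    unfolding trib_lin_def index_shift using assms by algebra
qed

lemma trib_invariants_iterate:
  fixes f :: "'a::idom"
  assumes "f ^ 3 = f\<^sup>2 + f + 1"
    and "\<And>j. j < N \<Longrightarrow> x (j + 3) = x (j + 2) + x (j + 1) + x j"
    and "k \<le> N"
  shows "trib_quad f x 0 = f ^ k * trib_quad f x k \<and> trib_lin f x k = f ^ k * trib_lin f x 0"
  using assms(3)
proof (induction k)
  case (Suc k)
  then have "x (k + 3) = x (k + 2) + x (k + 1) + x k"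
    by (intro assms(2)) simp
  then have "trib_quad f x k = f * trib_quad f x (Suc k)"
    and "trib_lin f x (Suc k) = f * trib_lin f x k"
    using trib_quad_step[OF assms(1)] trib_lin_step[OF assms(1)] by simp_all
  with Suc show ?case
    by (simp add: mult_ac)
qed simp

lemma trib_rec_zero_backwards:
  fixes x :: "nat \<Rightarrow> 'a::ab_group_add"
  assumes "\<And>j. j < N \<Longrightarrow> x (j + 3) = x (j + 2) + x (j + 1) + x j"
    and "x N = 0" "x (N + 1) = 0" "x (N + 2) = 0" "j \<le> N + 2"
  shows "x j = 0"
  using assms
proof (induction N arbitrary: j)
  case 0
  then have "j = 0 \<or> j = 1 \<or> j = 2"
    by auto
  with 0 show ?case
    by (auto simp: numeral_2_eq_2)
next
  case (Suc N)
  have zeros: "x (N + 1) = 0" "x (N + 2) = 0" "x (N + 3) = 0"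
    using Suc.prems(2-4) by (simp_all add: eval_nat_numeral)
  moreover have "x (N + 3) = x (N + 2) + x (N + 1) + x N"
    using Suc.prems(1) by simp
  ultimately have "x N = 0"
    by simp
  show ?case
  proof (cases "j = N + 3")
    case False
    with Suc.prems(5) have "j \<le> N + 2"
      by simp
    with Suc.IH Suc.prems(1) \<open>x N = 0\<close> zeros show ?thesis
      by simp
  qed (simp add: zeros)
qed

lemma trib_form_nonneg: "0 \<le> trib_form trib_phi u v"
proof -
  have "0 \<le> (trib_phi\<^sup>2 - trib_phi - 1) * u\<^sup>2 + (trib_phi - 1) * u * v + 1 * v\<^sup>2"
    using trib_phi_bounds trib_phi_square_bounds
    by (intro binary_quadratic_form_nonneg[where a_lo = "0.54" and b_hi = "0.84" and c_lo = "1"])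
      (auto simp: power2_eq_square)
  then show ?thesis
    by (simp add: trib_form_def algebra_simps)
qed

lemma trib_form_le: "trib_form trib_phi u v \<le> 3 / 2 * (u\<^sup>2 + v\<^sup>2)"
proof -
  have "0 \<le> (3 / 2 - (trib_phi\<^sup>2 - trib_phi - 1)) * u\<^sup>2 + (1 - trib_phi) * u * v
      + (1 / 2) * v\<^sup>2"
    using trib_phi_bounds trib_phi_square_bounds
    by (intro binary_quadratic_form_nonneg[where a_lo = "0.95" and b_hi = "0.84" and c_lo = "0.5"])
      (auto simp: power2_eq_square)
  then show ?thesis
    by (simp add: trib_form_def algebra_simps)
qed

text \<open>This is |(v - \<alpha> u) + s|^2 \<le> (1 + 3) |v - \<alpha> u|^2 + (1 + 1/3) s^2.\<close>
lemma trib_form_add_le: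
  "trib_form trib_phi u (v + s) \<le> 4 * trib_form trib_phi u v + 4 / 3 * s\<^sup>2"
proof -
  have "4 * trib_form trib_phi u v + 4 / 3 * s\<^sup>2 - trib_form trib_phi u (v + s)
      = trib_form trib_phi (3 * u) (3 * v - s) / 3"
    by (simp add: trib_form_def algebra_simps power2_eq_square)
  with trib_form_nonneg[of "3 * u" "3 * v - s"] show ?thesis
    by simp
qed

lemma trib_form_end_ge_norm:
  "p\<^sup>2 + q\<^sup>2 \<le> trib_form trib_phi (q - trib_phi * p) (- trib_phi * q)"
proof -
  have "trib_form trib_phi (q - trib_phi * p) (- trib_phi * q) - (p\<^sup>2 + q\<^sup>2)
      = (trib_phi - 1) * p\<^sup>2 + (trib_phi - 1) * p * q + (trib_phi\<^sup>2 - 2) * q\<^sup>2"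
    unfolding trib_form_def using trib_phi_cubic by algebra
  moreover have "0 \<le> (trib_phi - 1) * p\<^sup>2 + (trib_phi - 1) * p * q + (trib_phi\<^sup>2 - 2) * q\<^sup>2"
    using trib_phi_bounds trib_phi_square_bounds
    by (intro binary_quadratic_form_nonneg[where a_lo = "0.8" and b_hi = "0.9" and c_lo = "1.3"])
      (auto simp: power2_eq_square)
  ultimately show ?thesis
    by linarith
qed

lemma trib_form_end_ge_lin:
  "2 * ((trib_phi - 1) * q + (trib_phi\<^sup>2 - trib_phi - 1) * p)\<^sup>2
    \<le> trib_form trib_phi (q - trib_phi * p) (- trib_phi * q)"
proof -
  have "trib_form trib_phi (q - trib_phi * p) (- trib_phi * q)
        - 2 * ((trib_phi - 1) * q + (trib_phi\<^sup>2 - trib_phi - 1) * p)\<^sup>2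
      = (2 * trib_phi\<^sup>2 - 3 * trib_phi) * p\<^sup>2 + (4 * trib_phi\<^sup>2 - 3 * trib_phi - 9) * p * q
        + (4 * trib_phi - 3 - trib_phi\<^sup>2) * q\<^sup>2"
    unfolding trib_form_def using trib_phi_cubic by algebra
  moreover have "0 \<le> (2 * trib_phi\<^sup>2 - 3 * trib_phi) * p\<^sup>2
      + (4 * trib_phi\<^sup>2 - 3 * trib_phi - 9) * p * q + (4 * trib_phi - 3 - trib_phi\<^sup>2) * q\<^sup>2"
    using trib_phi_bounds trib_phi_square_bounds
    by (intro binary_quadratic_form_nonneg[where a_lo = "1.2" and b_hi = "1.1" and c_lo = "0.9"])
      (auto simp: power2_eq_square)
  ultimately show ?thesis
    by linarith
qed

lemma trib_quad_le_initial_terms: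
  fixes x :: "nat \<Rightarrow> real"
  assumes "2 * (trib_lin trib_phi x 0)\<^sup>2 \<le> trib_quad trib_phi x 0"
  shows "trib_quad trib_phi x 0 \<le> 144 * (x 0)\<^sup>2 + 306 * (x 1)\<^sup>2"
proof -
  define u where "u = x 1 - trib_phi * x 0"
  define w where "w = - (2 * trib_phi - 1) * x 1 - (trib_phi\<^sup>2 - trib_phi - 1) * x 0"
  define s where "s = trib_lin trib_phi x 0"
  have "8 * (x 0)\<^sup>2 + 17 * (x 1)\<^sup>2 - (u\<^sup>2 + w\<^sup>2)
      = (8 - 2 * trib_phi) * (x 0)\<^sup>2 + (2 * trib_phi\<^sup>2 - 6) * x 0 * x 1
        + (15 - 4 * trib_phi\<^sup>2 + 4 * trib_phi) * (x 1)\<^sup>2"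
    unfolding u_def w_def using trib_phi_cubic by algebra
  moreover have "0 \<le> (8 - 2 * trib_phi) * (x 0)\<^sup>2 + (2 * trib_phi\<^sup>2 - 6) * x 0 * x 1
        + (15 - 4 * trib_phi\<^sup>2 + 4 * trib_phi) * (x 1)\<^sup>2"
    using trib_phi_bounds trib_phi_square_bounds
    by (intro binary_quadratic_form_nonneg[where a_lo = 4 and b_hi = 1 and c_lo = 8])
      (auto simp: power2_eq_square)
  ultimately have uw: "u\<^sup>2 + w\<^sup>2 \<le> 8 * (x 0)\<^sup>2 + 17 * (x 1)\<^sup>2"
    by linarith
  \<comment> \<open>eliminating x 2 in favour of s gives x 2 - \<phi> x 1 = w + s\<close>
  have "trib_quad trib_phi x 0 = trib_form trib_phi u (w + s)"
    by (simp add: trib_quad_def trib_lin_def u_def w_def s_def algebra_simps)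
  then have "trib_quad trib_phi x 0 \<le> 12 * trib_form trib_phi u w"
    using trib_form_add_le[of u w s] assms unfolding s_def by linarith
  also have "\<dots> \<le> 18 * (u\<^sup>2 + w\<^sup>2)"
    using trib_form_le[of u w] by linarith
  also have "\<dots> \<le> 144 * (x 0)\<^sup>2 + 306 * (x 1)\<^sup>2"
    using uw by (simp add: algebra_simps)
  finally show ?thesis .
qed

lemma trib_initial_terms_large:
  fixes x :: "nat \<Rightarrow> real"
  assumes rec: "\<And>j. j < N \<Longrightarrow> x (j + 3) = x (j + 2) + x (j + 1) + x j"
    and last: "x (N + 2) = 0"
    and nonzero: "1 \<le> (x N)\<^sup>2 + (x (N + 1))\<^sup>2"
  shows "trib_phi ^ N \<le> 144 * (x 0)\<^sup>2 + 306 * (x 1)\<^sup>2"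
proof -
  define P where "P = trib_phi ^ N"
  define Q where "Q = trib_quad trib_phi x"
  define S where "S = trib_lin trib_phi x"
  have "1 \<le> P"
    unfolding P_def using trib_phi_bounds by (intro one_le_power) simp
  have transport: "Q 0 = P * Q N" "S N = P * S 0"
    using trib_invariants_iterate[OF trib_phi_cubic rec order.refl]
    unfolding P_def Q_def S_def by blast+
  have end_quad:
      "Q N = trib_form trib_phi (x (N + 1) - trib_phi * x N) (- trib_phi * x (N + 1))"
    and end_lin: "S N = (trib_phi - 1) * x (N + 1) + (trib_phi\<^sup>2 - trib_phi - 1) * x N"
    using last by (simp_all add: Q_def S_def trib_quad_def trib_lin_def)
  have "1 \<le> Q N"
    using trib_form_end_ge_norm[of "x N" "x (N + 1)"] nonzero unfolding end_quad
    by linarith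
  have "2 * (S N)\<^sup>2 \<le> Q N"
    using trib_form_end_ge_lin unfolding end_quad end_lin .
  have "1 \<le> P\<^sup>2"
    using \<open>1 \<le> P\<close> by (rule one_le_power)
  then have "2 * (S 0)\<^sup>2 \<le> P\<^sup>2 * (2 * (S 0)\<^sup>2)"
    using mult_right_mono[of 1 "P\<^sup>2" "2 * (S 0)\<^sup>2"] by simp
  also have "\<dots> = 2 * (S N)\<^sup>2"
    unfolding transport by (simp add: power_mult_distrib)
  also have "\<dots> \<le> Q N"
    by fact
  also have "\<dots> \<le> Q 0"
    unfolding transport using \<open>1 \<le> P\<close> \<open>1 \<le> Q N\<close> by simp
  finally have "Q 0 \<le> 144 * (x 0)\<^sup>2 + 306 * (x 1)\<^sup>2"
    unfolding Q_def S_def by (rule trib_quad_le_initial_terms)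
  moreover have "P \<le> Q 0"
    unfolding transport using \<open>1 \<le> P\<close> \<open>1 \<le> Q N\<close> by simp
  ultimately show ?thesis
    unfolding P_def by linarith
qed

lemma square_le_of_abs_le_powr_half:
  fixes b c y :: real
  assumes "0 < b" "\<bar>y\<bar> \<le> c * b powr (real m / 2)"
  shows "y\<^sup>2 \<le> c\<^sup>2 * b ^ m"
proof -
  have "y\<^sup>2 \<le> (c * b powr (real m / 2))\<^sup>2"
    using assms(2) by (metis abs_ge_zero power2_abs power_mono)
  also have "\<dots> = c\<^sup>2 * b powr real m"
    by (simp add: power_mult_distrib power2_eq_square powr_add[symmetric])
  also have "\<dots> = c\<^sup>2 * b ^ m"
    using assms(1) by (simp add: powr_realpow)
  finally show ?thesis .
qed

lemma one_le_sum_squares_of_int: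
  fixes k l :: int
  assumes "k \<noteq> 0 \<or> l \<noteq> 0"
  shows "1 \<le> (real_of_int k)\<^sup>2 + (real_of_int l)\<^sup>2"
proof -
  have "0 < k\<^sup>2 \<or> 0 < l\<^sup>2"
    using assms by auto
  then have "1 \<le> k\<^sup>2 + l\<^sup>2"
    using zero_le_power2[of k] zero_le_power2[of l] by linarith
  then show ?thesis
    by (metis of_int_1_le_iff of_int_add of_int_power)
qed

theorem corollary2:
  fixes n :: nat and a :: "nat \<Rightarrow> int"
  assumes "n \<ge> 3"
    and "\<exists>i\<in>{1..n}. a i \<noteq> 0"
    and "\<And>i. 4 \<le> i \<Longrightarrow> i \<le> n \<Longrightarrow> a i = a (i - 1) + a (i - 2) + a (i - 3)"
    and "a n = 0"
  shows "\<bar>real_of_int (a 1)\<bar> > 0.01 * trib_phi powr (real n / 2)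
       \<or> \<bar>real_of_int (a 2)\<bar> > 0.01 * trib_phi powr ((real n - 1) / 2)"
proof (rule ccontr)
  assume small: "\<not> ?thesis"
  define N where "N = n - 3"
  have n: "n = N + 3"
    unfolding N_def using assms(1) by simp
  define x where "x j = real_of_int (a (j + 1))" for j
  have rec: "x (j + 3) = x (j + 2) + x (j + 1) + x j" if "j < N" for j
    using assms(3)[of "j + 4"] that unfolding x_def n by (simp add: eval_nat_numeral)
  have last: "x (N + 2) = 0"
    using assms(4) unfolding x_def n by (simp add: eval_nat_numeral)
  have "a (N + 1) \<noteq> 0 \<or> a (N + 2) \<noteq> 0"
  proof (rule ccontr)
    assume "\<not> ?thesis"
    then have "x N = 0" "x (N + 1) = 0"
      unfolding x_def by (simp_all add: add.assoc)
    have "a i = 0" if "i \<in> {1..n}" for i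
    proof -
      have "i - 1 \<le> N + 2" "i - 1 + 1 = i"
        using that n by auto
      with trib_rec_zero_backwards[OF rec \<open>x N = 0\<close> \<open>x (N + 1) = 0\<close> last, of "i - 1"]
      show ?thesis
        unfolding x_def by simp
    qed
    with assms(2) show False
      by blast
  qed
  then have "1 \<le> (x N)\<^sup>2 + (x (N + 1))\<^sup>2"
    unfolding x_def by (simp add: one_le_sum_squares_of_int add.assoc)
  with rec last have "trib_phi ^ N \<le> 144 * (x 0)\<^sup>2 + 306 * (x 1)\<^sup>2"
    by (rule trib_initial_terms_large)
  also have "\<dots> \<le> (144 * trib_phi ^ 3 + 306 * trib_phi\<^sup>2) / 10000 * trib_phi ^ N"
  proof -
    have "(x 0)\<^sup>2 \<le> 0.01\<^sup>2 * trib_phi ^ (N + 3)"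
      using small trib_phi_bounds unfolding x_def n
      by (intro square_le_of_abs_le_powr_half) auto
    moreover have "(x 1)\<^sup>2 \<le> 0.01\<^sup>2 * trib_phi ^ (N + 2)"
      using small trib_phi_bounds unfolding x_def n one_add_one
      by (intro square_le_of_abs_le_powr_half) (auto simp: algebra_simps)
    ultimately show ?thesis
      unfolding power_add by (simp add: field_simps)
  qed
  also have "\<dots> < trib_phi ^ N"
    using trib_phi_cubic trib_phi_bounds trib_phi_square_bounds by simp
  finally show False
    by simp
qed

end
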